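(* Let $A=\begin{pmatrix}b&0&0\\1&0&k\\0&1&t\end{pmatrix}$, $G_1=\begin{pmatrix}b(2b-t)\\2b-t\\2\end{pmatrix}$ and $G_{n+1}=A^nG_1$ for $n\ge1$, over the graded ring $\mathbb{C}[b,t,k]$ with $\deg b=\deg t=1$, $\deg k=2$. Then the Hilbert series of the graded ring $\mathbb{C}[b,t,k]/(G_{n+1})$ (the ideal generated by the three entries of $G_{n+1}$) is $$\frac{(1-u^n)(1-u^{n+1})(1-u^{n+2})}{(u-1)^2(1-u^2)}.$$ *)

theory Defs
  imports "HOL-Analysis.Analysis" "HOL-Library.Poly_Mapping"
    "HOL-Computational_Algebra.Formal_Power_Series"
begin

text \<open>Polynomials in C[b,t,k]: finitely supported maps from exponent vectors
  (nat \<Rightarrow>0 nat) to complex coefficients. Variable 0 is b, 1 is t, 2 is k.\<close>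
type_synonym mpoly = "(nat \<Rightarrow>\<^sub>0 nat) \<Rightarrow>\<^sub>0 complex"

definition var :: "nat \<Rightarrow> mpoly" where
  "var i = Poly_Mapping.single (Poly_Mapping.single i 1) 1"

definition vb :: mpoly where "vb = var 0"
definition vt :: mpoly where "vt = var 1"
definition vk :: mpoly where "vk = var 2"

definition cscale :: "complex \<Rightarrow> mpoly \<Rightarrow> mpoly" where
  "cscale c p = Poly_Mapping.single 0 c * p"

definition wdeg :: "(nat \<Rightarrow>\<^sub>0 nat) \<Rightarrow> nat" where
  "wdeg m = poly_mapping.lookup m 0 + poly_mapping.lookup m 1 + 2 * poly_mapping.lookup m 2"

definition polys3 :: "mpoly set" where
  "polys3 = {p. \<forall>m \<in> Poly_Mapping.keys p. Poly_Mapping.keys m \<subseteq> {0,1,2}}"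

definition homog :: "nat \<Rightarrow> mpoly set" where
  "homog d = {p \<in> polys3. \<forall>m \<in> Poly_Mapping.keys p. wdeg m = d}"

definition gen_ideal :: "mpoly ^ 3 \<Rightarrow> mpoly set" where
  "gen_ideal g = {(\<Sum>i\<in>UNIV. a $ i * g $ i) | a. \<forall>i. a $ i \<in> polys3}"

text \<open>Hilbert function of C[b,t,k]/I: dim_C (R_d / I_d) = dim R_d - dim (I \<inter> R_d).\<close>
definition hilbert_fun :: "mpoly set \<Rightarrow> nat \<Rightarrow> nat" where
  "hilbert_fun I d = vector_space.dim cscale (homog d) - vector_space.dim cscale (I \<inter> homog d)"

definition hilbert_series :: "mpoly set \<Rightarrow> complex fps" where
  "hilbert_series I = Abs_fps (\<lambda>d. of_nat (hilbert_fun I d))"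

primrec matpow :: "'a::semiring_1 ^ 'n ^ 'n \<Rightarrow> nat \<Rightarrow> 'a ^ 'n ^ 'n" where
  "matpow M 0 = mat 1"
| "matpow M (Suc n) = M ** matpow M n"

definition matA :: "mpoly ^ 3 ^ 3" where
  "matA = vector [vector [vb, 0, 0], vector [1, 0, vk], vector [0, 1, vt]]"

definition G1 :: "mpoly ^ 3" where
  "G1 = vector [vb * (2 * vb - vt), 2 * vb - vt, 2]"

definition G :: "nat \<Rightarrow> mpoly ^ 3" where
  "G m = matpow matA (m - 1) *v G1"

end

theory Submission
  imports Defs
begin

(*
  Let P = lucas (P 0 = 2, P 1 = t, P (m + 2) = t P (m + 1) + k P m) and Z = zseq
  (Z 0 = 0, Z (m + 1) = b Z m + P m). The matrix recursion turns into
  G (m + 1) = (Z (m + 3) - t Z (m + 2) - k Z (m + 1), Z (m + 2) - t Z (m + 1), Z (m + 1)),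
  so the ideal is I = (Z (n + 1), P (n + 1), P (n + 2)).

  Call b^i t^a k^c standard if i < n and a + c <= n. Each nonstandard monomial is the
  leading monomial, for the order comparing first the exponent of b and then that of t,
  of an explicit homogeneous element of I (its reducer): a monomial multiple of Z (n + 1)
  (leading term 2 b^n), of P (n + 1), or of k^j P (n + 1 - j) (leading term t^(n + 1 - j) k^j).
  Hence the standard monomials span every graded piece of R / I. Conversely the span of
  the reducers is stable under multiplication by b, t and k and contains the generators,
  so it contains I, which gives dim I_d <= #(nonstandard monomials of degree d).
  Thus the standard monomials form a basis of R / I, and the Hilbert series is
  (sum over i < n of u^i) times (sum over a + c <= n of u^(a + 2 c)).
*)

section \<open>Linear algebra\<close>

lemma (in vector_space) span_triangular:
  assumes "wf R"
    and "\<And>x. x \<in> M \<Longrightarrow> x \<notin> S \<Longrightarrow>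
      \<exists>s. s \<noteq> 0 \<and> r x - s *s e x \<in> span (e ` {y \<in> M. (y, x) \<in> R})"
  shows "e ` M \<subseteq> span (r ` (M - S) \<union> e ` (M \<inter> S))"
proof -
  let ?T = "r ` (M - S) \<union> e ` (M \<inter> S)"
  have "x \<in> M \<longrightarrow> e x \<in> span ?T" for x
    using assms(1)
  proof (induction x rule: wf_induct_rule)
    case (less x)
    show ?case
    proof (intro impI)
      assume x: "x \<in> M"
      show "e x \<in> span ?T"
      proof (cases "x \<in> S")
        case True
        then show ?thesis using x by (intro span_base) blast
      next
        case False
        then obtain s where s: "s \<noteq> 0" "r x - s *s e x \<in> span (e ` {y \<in> M. (y, x) \<in> R})"
          using assms(2) x by blast
        have "span (e ` {y \<in> M. (y, x) \<in> R}) \<subseteq> span ?T"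
          using less.IH by (intro span_minimal) auto
        moreover have "r x \<in> span ?T"
          using x False by (intro span_base) blast
        ultimately have "r x - (r x - s *s e x) \<in> span ?T"
          using s(2) by (blast intro: span_diff)
        then have "s *s e x \<in> span ?T"
          by simp
        then have "(1 / s) *s (s *s e x) \<in> span ?T"
          by (rule span_scale)
        moreover have "(1 / s) *s (s *s e x) = e x"
          using s(1) by simp
        ultimately show ?thesis
          by metis
      qed
    qed
  qed
  then show ?thesis by blast
qed

lemma (in vector_space) card_le_dim_add_card:
  assumes "finite B" "independent B" "U \<subseteq> span B" "B \<subseteq> span (U \<union> S)" "finite S"
  shows "card B \<le> dim U + card S"
proof -
  obtain C where C: "C \<subseteq> U" "independent C" "U \<subseteq> span C" "card C = dim U"
    by (rule basis_exists)
  have "finite C"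
    using independent_span_bound[OF assms(1) C(2)] C(1) assms(3) by blast
  have "U \<union> S \<subseteq> span (C \<union> S)"
    using C(3) span_mono[of C "C \<union> S"] span_superset[of "C \<union> S"] by blast
  then have "B \<subseteq> span (C \<union> S)"
    using assms(4) span_minimal[OF _ subspace_span] by blast
  then have "card B \<le> card (C \<union> S)"
    using independent_span_bound[OF _ assms(2)] \<open>finite C\<close> assms(5) by blast
  also have "\<dots> \<le> dim U + card S"
    using card_Un_le[of C S] C(4) by simp
  finally show ?thesis .
qed

section \<open>Polynomials as a vector space\<close>

interpretation cs: vector_space cscale
proof unfold_locales
  fix a b :: complex and x y :: mpoly
  show "cscale a (x + y) = cscale a x + cscale a y"
    by (simp add: cscale_def algebra_simps)
  show "cscale (a + b) x = cscale a x + cscale b x"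
    by (simp add: cscale_def algebra_simps single_add)
  show "cscale a (cscale b x) = cscale (a * b) x"
    by (simp add: cscale_def mult.assoc[symmetric] mult_single)
  show "cscale 1 x = x"
    by (simp add: cscale_def)
qed

lemma cscale_mult_left [simp]: "cscale c p * q = cscale c (p * q)"
  by (simp add: cscale_def mult.assoc)

lemma cscale_mult_right [simp]: "p * cscale c q = cscale c (p * q)"
  by (simp add: cscale_def mult.left_commute)

lemma lookup_cscale [simp]: "Poly_Mapping.lookup (cscale c p) m = c * Poly_Mapping.lookup p m"
  unfolding cscale_def mult_map_scale_conv_mult[symmetric]
  by (simp add: Poly_Mapping.map.rep_eq when_def)

lemma cscale_numeral: "cscale (numeral w) p = numeral w * p"
  by (simp add: cscale_def)

lemma keys_cscale_subset: "Poly_Mapping.keys (cscale c p) \<subseteq> Poly_Mapping.keys p"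
  by (auto simp: in_keys_iff)

lemma mult_in_span:
  assumes "x \<in> cs.span S" "\<And>s. s \<in> S \<Longrightarrow> q * s \<in> cs.span T"
  shows "q * x \<in> cs.span T"
  using assms(1)
proof (induction rule: cs.span_induct)
  case base
  show ?case
    by (rule cs.subspaceI) (auto simp: distrib_left cs.span_zero cs.span_add cs.span_scale)
next
  case (step x)
  then show ?case using assms(2) by simp
qed

lemma mult_span_span:
  assumes "x \<in> cs.span S" "y \<in> cs.span T" "\<And>s t. s \<in> S \<Longrightarrow> t \<in> T \<Longrightarrow> s * t \<in> cs.span U"
  shows "x * y \<in> cs.span U"
proof -
  have "y * s \<in> cs.span U" if "s \<in> S" for s
    using mult_in_span[OF assms(2), of s U] assms(3) that by (metis mult.commute)
  then show ?thesis
    using mult_in_span[OF assms(1), of y U] by (simp add: mult.commute)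
qed

lemma keys_subset_eq_span:
  "{p :: mpoly. Poly_Mapping.keys p \<subseteq> M} = cs.span ((\<lambda>m. Poly_Mapping.single m 1) ` M)"
proof
  show "{p. Poly_Mapping.keys p \<subseteq> M} \<subseteq> cs.span ((\<lambda>m. Poly_Mapping.single m 1) ` M)"
  proof
    fix p :: mpoly assume "p \<in> {p. Poly_Mapping.keys p \<subseteq> M}"
    have "p = (\<Sum>m\<in>Poly_Mapping.keys p. cscale (Poly_Mapping.lookup p m) (Poly_Mapping.single m 1))"
    proof (rule poly_mapping_eqI)
      fix x
      have "Poly_Mapping.lookup
          (\<Sum>m\<in>Poly_Mapping.keys p. cscale (Poly_Mapping.lookup p m) (Poly_Mapping.single m 1)) x
          = (\<Sum>m\<in>Poly_Mapping.keys p. Poly_Mapping.lookup p m * (1 when m = x))"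
        by (simp add: lookup_sum lookup_single)
      also have "\<dots> = Poly_Mapping.lookup p x"
        by (simp add: when_def if_distrib sum.delta in_keys_iff cong: if_cong)
      finally show "Poly_Mapping.lookup p x = Poly_Mapping.lookup
          (\<Sum>m\<in>Poly_Mapping.keys p. cscale (Poly_Mapping.lookup p m) (Poly_Mapping.single m 1)) x"
        by simp
    qed
    also have "\<dots> \<in> cs.span ((\<lambda>m. Poly_Mapping.single m 1) ` M)"
      using \<open>p \<in> _\<close> by (intro cs.span_sum cs.span_scale cs.span_base) auto
    finally show "p \<in> cs.span ((\<lambda>m. Poly_Mapping.single m 1) ` M)" .
  qed
  have "cs.subspace {p :: mpoly. Poly_Mapping.keys p \<subseteq> M}"
  proof (rule cs.subspaceI)
    fix x y :: mpoly assume "x \<in> {p. Poly_Mapping.keys p \<subseteq> M}" "y \<in> {p. Poly_Mapping.keys p \<subseteq> M}"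
    then show "x + y \<in> {p. Poly_Mapping.keys p \<subseteq> M}" using keys_add[of x y] by auto
  next
    fix c and x :: mpoly assume "x \<in> {p. Poly_Mapping.keys p \<subseteq> M}"
    then show "cscale c x \<in> {p. Poly_Mapping.keys p \<subseteq> M}" using keys_cscale_subset[of c x] by auto
  qed simp
  then show "cs.span ((\<lambda>m. Poly_Mapping.single m 1) ` M) \<subseteq> {p. Poly_Mapping.keys p \<subseteq> M}"
    by (rule cs.span_minimal[rotated]) auto
qed

lemma independent_singles: "cs.independent (range (\<lambda>m. Poly_Mapping.single m 1))"
  unfolding cs.independent_explicit_module
proof (intro allI impI)
  fix T u v
  assume T: "finite T" "T \<subseteq> range (\<lambda>m. Poly_Mapping.single m 1)"
    and sum0: "(\<Sum>w\<in>T. cscale (u w) w) = 0" and v: "v \<in> T"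
  obtain m where m: "v = Poly_Mapping.single m 1" using v T(2) by blast
  have "Poly_Mapping.lookup w m = (if w = v then 1 else 0)" if "w \<in> T" for w
    using that T(2) m by (auto simp: lookup_single when_def)
  then have "0 = (\<Sum>w\<in>T. u w * (if w = v then 1 else 0))"
    using arg_cong[OF sum0, of "\<lambda>p. Poly_Mapping.lookup p m"] by (simp add: lookup_sum)
  also have "\<dots> = u v" using T(1) v by (simp add: if_distrib cong: if_cong)
  finally show "u v = 0" by simp
qed

section \<open>Monomials\<close>

fun expo :: "nat \<times> nat \<times> nat \<Rightarrow> (nat \<Rightarrow>\<^sub>0 nat)" where
  "expo (i, a, c) = Poly_Mapping.single 0 i + Poly_Mapping.single 1 a + Poly_Mapping.single 2 c"

declare expo.simps [simp del]

definition mon :: "nat \<times> nat \<times> nat \<Rightarrow> mpoly" where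
  "mon x = Poly_Mapping.single (expo x) 1"

fun mdeg :: "nat \<times> nat \<times> nat \<Rightarrow> nat" where
  "mdeg (i, a, c) = i + a + 2 * c"

lemma lookup_expo [simp]:
  "Poly_Mapping.lookup (expo (i, a, c)) 0 = i"
  "Poly_Mapping.lookup (expo (i, a, c)) (Suc 0) = a"
  "Poly_Mapping.lookup (expo (i, a, c)) 2 = c"
  by (simp_all add: expo.simps lookup_add lookup_single)

lemma keys_expo: "Poly_Mapping.keys (expo x) \<subseteq> {0, 1, 2}"
  by (cases x) (auto simp: expo.simps in_keys_iff lookup_add lookup_single when_def split: if_splits)

lemma inj_expo: "inj expo"
proof (rule injI)
  fix x y assume "expo x = expo y"
  then show "x = y"
    by (cases x, cases y) (metis lookup_expo)
qed

lemma range_expo: "range expo = {m. Poly_Mapping.keys m \<subseteq> {0, 1, 2}}"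
proof (intro equalityI subsetI)
  fix m :: "nat \<Rightarrow>\<^sub>0 nat" assume "m \<in> {m. Poly_Mapping.keys m \<subseteq> {0, 1, 2}}"
  then have "m = expo (Poly_Mapping.lookup m 0, Poly_Mapping.lookup m 1, Poly_Mapping.lookup m 2)"
    by (intro poly_mapping_eqI) (auto simp: expo.simps lookup_add lookup_single when_def in_keys_iff)
  then show "m \<in> range expo" by blast
qed (use keys_expo in blast)

lemma wdeg_expo [simp]: "wdeg (expo x) = mdeg x"
  by (cases x) (simp add: wdeg_def)

lemma mon_mult: "mon (i, a, c) * mon (i', a', c') = mon (i + i', a + a', c + c')"
  by (simp add: mon_def expo.simps mult_single single_add algebra_simps)

lemma mon_zero [simp]: "mon (0, 0, 0) = 1"
  by (simp add: mon_def expo.simps)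

lemma inj_mon: "inj mon"
  using inj_expo unfolding inj_def mon_def
  by (metis lookup_single_eq lookup_single_not_eq zero_neq_one)

lemma vars_eq_mon: "vb = mon (1, 0, 0)" "vt = mon (0, 1, 0)" "vk = mon (0, 0, 1)"
  by (simp_all add: vb_def vt_def vk_def var_def mon_def expo.simps)

lemma vars_mult_mon:
  "vb * mon (i, a, c) = mon (Suc i, a, c)"
  "vt * mon (i, a, c) = mon (i, Suc a, c)"
  "vk * mon (i, a, c) = mon (i, a, Suc c)"
  by (simp_all add: vars_eq_mon mon_mult)

lemma mon_eq_prod_powers: "mon (i, a, c) = vb ^ i * vt ^ a * vk ^ c"
proof -
  have "mon (i, 0, 0) = vb ^ i"
    by (induction i) (simp_all flip: vars_mult_mon)
  moreover have "mon (0, a, 0) = vt ^ a"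
    by (induction a) (simp_all flip: vars_mult_mon)
  moreover have "mon (0, 0, c) = vk ^ c"
    by (induction c) (simp_all flip: vars_mult_mon)
  ultimately show ?thesis
    by (metis mon_mult add_0 add_0_right)
qed

lemma mon_mult_powers:
  "mon (i, a, c) * vb ^ j = mon (i + j, a, c)"
  "mon (i, a, c) * vt ^ j = mon (i, a + j, c)"
  "mon (i, a, c) * vk ^ j = mon (i, a, c + j)"
proof -
  have "vb ^ j = mon (j, 0, 0)" "vt ^ j = mon (0, j, 0)" "vk ^ j = mon (0, 0, j)"
    by (simp_all add: mon_eq_prod_powers)
  then show "mon (i, a, c) * vb ^ j = mon (i + j, a, c)" "mon (i, a, c) * vt ^ j = mon (i, a + j, c)"
    "mon (i, a, c) * vk ^ j = mon (i, a, c + j)"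
    by (simp_all add: mon_mult)
qed

definition mon_span :: "(nat \<times> nat \<times> nat \<Rightarrow> bool) \<Rightarrow> mpoly set" where
  "mon_span P = cs.span (mon ` Collect P)"

lemma mon_in_mon_span: "P x \<Longrightarrow> mon x \<in> mon_span P"
  unfolding mon_span_def by (intro cs.span_base imageI CollectI)

lemma subspace_mon_span: "cs.subspace (mon_span P)"
  by (simp add: mon_span_def)

lemma mon_span_add: "x \<in> mon_span P \<Longrightarrow> y \<in> mon_span P \<Longrightarrow> x + y \<in> mon_span P"
  by (rule cs.subspace_add[OF subspace_mon_span])

lemma mon_span_mono: "(\<And>x. P x \<Longrightarrow> Q x) \<Longrightarrow> mon_span P \<subseteq> mon_span Q"
  unfolding mon_span_def by (intro cs.span_mono) auto

lemma mon_span_mult: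
  assumes "p \<in> mon_span P" "q \<in> mon_span Q"
    and "\<And>i a c i' a' c'. P (i, a, c) \<Longrightarrow> Q (i', a', c') \<Longrightarrow> R (i + i', a + a', c + c')"
  shows "p * q \<in> mon_span R"
  using assms(1,2) unfolding mon_span_def
proof (rule mult_span_span)
  fix s t assume "s \<in> mon ` Collect P" "t \<in> mon ` Collect Q"
  then show "s * t \<in> cs.span (mon ` Collect R)"
    using assms(3) by (auto simp: mon_mult intro!: cs.span_base)
qed

lemma vars_in_mon_span:
  "vb \<in> mon_span (\<lambda>x. x = (1, 0, 0))"
  "vt \<in> mon_span (\<lambda>x. x = (0, 1, 0))"
  "vk \<in> mon_span (\<lambda>x. x = (0, 0, 1))"
  by (simp_all add: vars_eq_mon mon_in_mon_span)

lemma polys3_eq_mon_span: "polys3 = mon_span (\<lambda>_. True)"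
proof -
  have "polys3 = {p. Poly_Mapping.keys p \<subseteq> range expo}"
    by (auto simp: polys3_def range_expo)
  then show ?thesis
    by (simp add: keys_subset_eq_span mon_span_def image_image mon_def[abs_def])
qed

lemma homog_eq_mon_span: "homog d = mon_span (\<lambda>x. mdeg x = d)"
proof -
  have "expo ` {x. mdeg x = d} = {m \<in> range expo. wdeg m = d}"
    by auto
  then have "homog d = {p. Poly_Mapping.keys p \<subseteq> expo ` {x. mdeg x = d}}"
    unfolding homog_def polys3_def range_expo by auto
  then show ?thesis
    by (simp add: keys_subset_eq_span mon_span_def image_image mon_def[abs_def])
qed

lemma subspace_homog: "cs.subspace (homog d)"
  by (simp add: homog_eq_mon_span subspace_mon_span)

lemma mon_in_homog: "mon x \<in> homog (mdeg x)"
  by (simp add: homog_eq_mon_span mon_in_mon_span)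

lemma finite_mdeg_eq: "finite {x. mdeg x = d}"
proof (rule finite_subset)
  show "{x. mdeg x = d} \<subseteq> {..d} \<times> {..d} \<times> {..d}"
    by auto
qed simp

lemma dim_homog: "cs.dim (homog d) = card {x. mdeg x = d}"
proof -
  have "cs.independent (mon ` {x. mdeg x = d})"
    by (rule cs.independent_mono[OF independent_singles]) (auto simp: mon_def)
  then have "cs.dim (homog d) = card (mon ` {x. mdeg x = d})"
    by (simp add: homog_eq_mon_span mon_span_def cs.dim_span cs.dim_eq_card_independent)
  also have "\<dots> = card {x. mdeg x = d}"
    using inj_mon by (simp add: card_image inj_on_def inj_def)
  finally show ?thesis .
qed

lemma homog_in_span_graded:
  assumes "\<And>x. x \<in> A \<Longrightarrow> f x \<in> homog (deg x)" "p \<in> homog d" "p \<in> cs.span (f ` A)"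
  shows "p \<in> cs.span (f ` {x \<in> A. deg x = d})"
proof -
  define Z where "Z = {q :: mpoly. \<forall>m. wdeg m = d \<longrightarrow> Poly_Mapping.lookup q m = 0}"
  have "cs.subspace Z"
    unfolding Z_def cs.subspace_def by (simp add: lookup_add)
  have "f ` A = f ` {x \<in> A. deg x = d} \<union> f ` {x \<in> A. deg x \<noteq> d}"
    by blast
  then have "p \<in> cs.span (f ` {x \<in> A. deg x = d} \<union> f ` {x \<in> A. deg x \<noteq> d})"
    using assms(3) by simp
  then obtain u v where uv: "p = u + v" "u \<in> cs.span (f ` {x \<in> A. deg x = d})"
    "v \<in> cs.span (f ` {x \<in> A. deg x \<noteq> d})"
    unfolding cs.span_Un by blast
  have "f ` {x \<in> A. deg x \<noteq> d} \<subseteq> Z"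
  proof
    fix q assume "q \<in> f ` {x \<in> A. deg x \<noteq> d}"
    then obtain x where "q = f x" "x \<in> A" "deg x \<noteq> d"
      by blast
    then have "\<forall>m \<in> Poly_Mapping.keys q. wdeg m \<noteq> d"
      using assms(1)[of x] by (auto simp: homog_def)
    then show "q \<in> Z"
      by (auto simp: Z_def in_keys_iff)
  qed
  then have "v \<in> Z"
    using uv(3) cs.span_minimal[OF _ \<open>cs.subspace Z\<close>] by blast
  have "f ` {x \<in> A. deg x = d} \<subseteq> homog d"
    using assms(1) by blast
  then have "u \<in> homog d"
    using uv(2) cs.span_minimal[OF _ subspace_homog] by blast
  then have "v \<in> homog d"
    using assms(2) uv(1) cs.subspace_diff[OF subspace_homog, of p d u] by simp
  have "Poly_Mapping.lookup v m = 0" for m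
    using \<open>v \<in> Z\<close> \<open>v \<in> homog d\<close>
    by (cases "m \<in> Poly_Mapping.keys v") (auto simp: Z_def homog_def in_keys_iff)
  then have "v = 0"
    by (intro poly_mapping_eqI) simp
  then show ?thesis
    using uv by simp
qed

lemma mon_in_polys3: "mon x \<in> polys3"
  by (simp add: polys3_eq_mon_span mon_in_mon_span)

lemma subspace_polys3: "cs.subspace polys3"
  by (simp add: polys3_eq_mon_span subspace_mon_span)

lemma zero_in_polys3: "0 \<in> polys3"
  by (rule cs.subspace_0[OF subspace_polys3])

lemma one_in_polys3: "1 \<in> polys3"
  using mon_in_polys3[of "(0, 0, 0)"] by simp

lemma vars_in_polys3: "vb \<in> polys3" "vt \<in> polys3" "vk \<in> polys3"
  by (simp_all add: vars_eq_mon mon_in_polys3)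

lemma polys3_add: "p \<in> polys3 \<Longrightarrow> q \<in> polys3 \<Longrightarrow> p + q \<in> polys3"
  by (rule cs.subspace_add[OF subspace_polys3])

lemma polys3_diff: "p \<in> polys3 \<Longrightarrow> q \<in> polys3 \<Longrightarrow> p - q \<in> polys3"
  by (rule cs.subspace_diff[OF subspace_polys3])

lemma polys3_mult: "p \<in> polys3 \<Longrightarrow> q \<in> polys3 \<Longrightarrow> p * q \<in> polys3"
  unfolding polys3_eq_mon_span by (rule mon_span_mult)

lemmas polys3_closed =
  zero_in_polys3 one_in_polys3 vars_in_polys3 mon_in_polys3 polys3_add polys3_diff polys3_mult

lemma homog_mult: "p \<in> homog d \<Longrightarrow> q \<in> homog e \<Longrightarrow> p * q \<in> homog (d + e)"
  unfolding homog_eq_mon_span by (erule mon_span_mult, assumption) auto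

lemma polys3_mult_closed:
  assumes "cs.subspace U"
    and "\<And>u. u \<in> U \<Longrightarrow> vb * u \<in> U" "\<And>u. u \<in> U \<Longrightarrow> vt * u \<in> U" "\<And>u. u \<in> U \<Longrightarrow> vk * u \<in> U"
    and "p \<in> polys3" "u \<in> U"
  shows "p * u \<in> U"
proof -
  have powers: "v ^ e * u \<in> U" if "\<And>u. u \<in> U \<Longrightarrow> v * u \<in> U" "u \<in> U" for v :: mpoly and e u
    using that by (induction e arbitrary: u) (auto simp: mult.assoc)
  have "u * mon x \<in> cs.span U" for x
    using powers[OF assms(2) powers[OF assms(3) powers[OF assms(4) assms(6)]]]
    by (cases x) (auto simp: mon_eq_prod_powers mult_ac intro: cs.span_base)
  then have "u * p \<in> cs.span U"
    using assms(5) unfolding polys3_eq_mon_span mon_span_def by (elim mult_in_span) auto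
  then show ?thesis
    using assms(1) by (metis cs.span_eq_iff mult.commute)
qed

section \<open>Ideals generated by the entries of a vector\<close>

lemma gen_ideal_mult:
  assumes "p \<in> polys3" "x \<in> gen_ideal g"
  shows "p * x \<in> gen_ideal g"
proof -
  obtain a where a: "x = (\<Sum>i\<in>UNIV. a $ i * g $ i)" "\<forall>i. a $ i \<in> polys3"
    using assms(2) by (auto simp: gen_ideal_def)
  show ?thesis
    unfolding gen_ideal_def mem_Collect_eq
    by (rule exI[of _ "\<chi> j. p * a $ j"]) (use a assms(1) in \<open>auto simp: sum_distrib_left mult.assoc intro: polys3_mult\<close>)
qed

lemma gen_ideal_add:
  assumes "x \<in> gen_ideal g" "y \<in> gen_ideal g"
  shows "x + y \<in> gen_ideal g"
proof -
  obtain a where a: "x = (\<Sum>i\<in>UNIV. a $ i * g $ i)" "\<forall>i. a $ i \<in> polys3"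
    using assms(1) by (auto simp: gen_ideal_def)
  obtain b where b: "y = (\<Sum>i\<in>UNIV. b $ i * g $ i)" "\<forall>i. b $ i \<in> polys3"
    using assms(2) by (auto simp: gen_ideal_def)
  show ?thesis
    unfolding gen_ideal_def mem_Collect_eq
    by (rule exI[of _ "a + b"]) (use a b in \<open>auto simp: sum.distrib distrib_right intro: polys3_add\<close>)
qed

lemma gen_ideal_generator: "g $ j \<in> gen_ideal g"
proof -
  have "(\<Sum>i\<in>UNIV. (\<chi> k. if k = j then 1 else 0) $ i * g $ i) = (\<Sum>i\<in>UNIV. if i = j then g $ i else 0)"
    by (rule sum.cong) auto
  then have "g $ j = (\<Sum>i\<in>UNIV. (\<chi> k. if k = j then 1 else 0) $ i * g $ i)"
    by simp
  moreover have "(\<chi> k. if k = j then 1 else 0) $ i \<in> polys3" for i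
    by (simp add: zero_in_polys3 one_in_polys3)
  ultimately show ?thesis
    unfolding gen_ideal_def by blast
qed

lemma subspace_gen_ideal: "cs.subspace (gen_ideal g)"
proof (rule cs.subspaceI)
  show "0 \<in> gen_ideal g"
    using gen_ideal_mult[OF zero_in_polys3 gen_ideal_generator] by simp
  show "cscale c x \<in> gen_ideal g" if "x \<in> gen_ideal g" for c x
  proof -
    have "cscale c 1 \<in> polys3"
      by (rule cs.subspace_scale[OF subspace_polys3 one_in_polys3])
    then show ?thesis
      using gen_ideal_mult[OF _ that, of "cscale c 1"] by simp
  qed
qed (fact gen_ideal_add)

lemma gen_ideal_diff: "x \<in> gen_ideal g \<Longrightarrow> y \<in> gen_ideal g \<Longrightarrow> x - y \<in> gen_ideal g"
  by (rule cs.subspace_diff[OF subspace_gen_ideal])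

lemmas gen_ideal_closed = gen_ideal_add gen_ideal_diff gen_ideal_mult

lemma gen_ideal_least:
  assumes "cs.subspace U" "\<And>p u. p \<in> polys3 \<Longrightarrow> u \<in> U \<Longrightarrow> p * u \<in> U" "\<And>i. g $ i \<in> U"
  shows "gen_ideal g \<subseteq> U"
  unfolding gen_ideal_def using assms by (auto intro!: cs.subspace_sum)

lemma gen_ideal_subset:
  assumes "\<And>i. g $ i \<in> gen_ideal h"
  shows "gen_ideal g \<subseteq> gen_ideal h"
  using subspace_gen_ideal gen_ideal_mult assms by (rule gen_ideal_least)

section \<open>The sequences P and Z and the ideal\<close>

text \<open>\<open>lucas m\<close> is \<open>\<alpha>^m + \<beta>^m\<close> for the roots \<open>\<alpha>, \<beta>\<close> of \<open>x^2 = t x + k\<close>.\<close>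

fun lucas :: "nat \<Rightarrow> mpoly" where
  "lucas 0 = 2"
| "lucas (Suc 0) = vt"
| "lucas (Suc (Suc m)) = vt * lucas (Suc m) + vk * lucas m"

fun zseq :: "nat \<Rightarrow> mpoly" where
  "zseq 0 = 0"
| "zseq (Suc m) = vb * zseq m + lucas m"

declare lucas.simps(3) [simp del] zseq.simps(2) [simp del]

lemma zseq_recurrence_defect:
  "vb * (zseq (m + 3) - vt * zseq (m + 2) - vk * zseq (m + 1))
    = zseq (m + 4) - vt * zseq (m + 3) - vk * zseq (m + 2)"
  by (simp add: zseq.simps lucas.simps numeral_eq_Suc algebra_simps)

lemma matA_mult_vector: "matA *v vector [x, y, z] = vector [vb * x, x + vk * z, y + vt * z]"
  unfolding vec_eq_iff forall_3 by (simp add: matA_def matrix_vector_mult_def sum_3)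

lemma G_Suc:
  "G (Suc m) = vector [zseq (m + 3) - vt * zseq (m + 2) - vk * zseq (m + 1),
                       zseq (m + 2) - vt * zseq (m + 1), zseq (m + 1)]"
proof (induction m)
  case 0
  show ?case
    by (simp add: zseq.simps lucas.simps G_def G1_def numeral_3_eq_3 numeral_2_eq_2 algebra_simps)
next
  case (Suc m)
  have "G (Suc (Suc m)) = matA *v G (Suc m)"
    by (simp add: G_def matrix_vector_mul_assoc)
  also have "\<dots> = vector [zseq (m + 4) - vt * zseq (m + 3) - vk * zseq (m + 2),
                          zseq (m + 3) - vt * zseq (m + 2), zseq (m + 2)]"
    unfolding Suc matA_mult_vector zseq_recurrence_defect
    by (simp add: algebra_simps)
  finally show ?case
    by (simp add: numeral_eq_Suc)
qed

definition lucas_ideal :: "nat \<Rightarrow> mpoly set" where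
  "lucas_ideal n = gen_ideal (vector [zseq (Suc n), lucas (Suc n), lucas (Suc (Suc n))])"

lemma generators_in_lucas_ideal:
  "zseq (Suc n) \<in> lucas_ideal n" "lucas (Suc n) \<in> lucas_ideal n" "lucas (Suc (Suc n)) \<in> lucas_ideal n"
  unfolding lucas_ideal_def
  using gen_ideal_generator[of "vector [zseq (Suc n), lucas (Suc n), lucas (Suc (Suc n))]"]
  by (metis vector_3)+

lemma gen_ideal_G_Suc: "gen_ideal (G (Suc n)) = lucas_ideal n"
proof
  have "G (Suc n) $ 1 = (vb - vt) * (vb * zseq (Suc n) + lucas (Suc n)) + lucas (Suc (Suc n))
      - vk * zseq (Suc n)"
    and "G (Suc n) $ 2 = (vb - vt) * zseq (Suc n) + lucas (Suc n)"
    and "G (Suc n) $ 3 = zseq (Suc n)"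
    by (simp_all add: zseq.simps lucas.simps G_Suc numeral_eq_Suc algebra_simps)
  then have "G (Suc n) $ i \<in> lucas_ideal n" for i
    using generators_in_lucas_ideal exhaust_3[of i] unfolding lucas_ideal_def
    by (auto intro!: gen_ideal_closed polys3_closed)
  then show "gen_ideal (G (Suc n)) \<subseteq> lucas_ideal n"
    unfolding lucas_ideal_def by (rule gen_ideal_subset)
next
  let ?I = "gen_ideal (G (Suc n))"
  have G: "G (Suc n) $ i \<in> ?I" for i
    by (rule gen_ideal_generator)
  have Z: "zseq (Suc n) = G (Suc n) $ 3"
    by (simp add: G_Suc)
  have P1: "lucas (Suc n) = G (Suc n) $ 2 - (vb - vt) * G (Suc n) $ 3"
    by (simp add: zseq.simps lucas.simps G_Suc numeral_eq_Suc algebra_simps)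
  have P2: "lucas (Suc (Suc n)) = G (Suc n) $ 1 - (vb - vt) * (vb * zseq (Suc n) + lucas (Suc n))
      + vk * zseq (Suc n)"
    by (simp add: zseq.simps lucas.simps G_Suc numeral_eq_Suc algebra_simps)
  have "zseq (Suc n) \<in> ?I" "lucas (Suc n) \<in> ?I"
    unfolding Z P1 by (auto intro!: G gen_ideal_closed polys3_closed)
  then have "lucas (Suc (Suc n)) \<in> ?I"
    unfolding P2 by (auto intro!: G gen_ideal_closed polys3_closed)
  then have "vector [zseq (Suc n), lucas (Suc n), lucas (Suc (Suc n))] $ i \<in> ?I" for i :: 3
    using \<open>zseq (Suc n) \<in> ?I\<close> \<open>lucas (Suc n) \<in> ?I\<close> exhaust_3[of i]
    by auto
  then show "lucas_ideal n \<subseteq> ?I"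
    unfolding lucas_ideal_def by (rule gen_ideal_subset)
qed

lemma lucas_in_mon_span: "lucas m \<in> mon_span (\<lambda>(i, a, c). i = 0 \<and> a + 2 * c = m)"
proof (induction m rule: lucas.induct)
  case 1
  have "lucas 0 = cscale 2 (mon (0, 0, 0))"
    by (simp add: cscale_def)
  then show ?case
    using cs.subspace_scale[OF subspace_mon_span mon_in_mon_span, of _ "(0, 0, 0)" 2] by simp
next
  case 2
  show ?case
    by (simp add: vars_eq_mon mon_in_mon_span)
next
  case (3 m)
  have "vt * lucas (Suc m) \<in> mon_span (\<lambda>(i, a, c). i = 0 \<and> a + 2 * c = Suc (Suc m))"
    using vars_in_mon_span(2) 3(1) by (rule mon_span_mult) auto
  moreover have "vk * lucas m \<in> mon_span (\<lambda>(i, a, c). i = 0 \<and> a + 2 * c = Suc (Suc m))"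
    using vars_in_mon_span(3) 3(2) by (rule mon_span_mult) auto
  ultimately show ?case
    by (simp only: lucas.simps mon_span_add)
qed

lemma lucas_minus_power_in_mon_span:
  assumes "m \<ge> 1"
  shows "lucas m - vt ^ m \<in> mon_span (\<lambda>(i, a, c). i = 0 \<and> a + 2 * c = m \<and> a < m)"
  using assms
proof (induction m rule: lucas.induct)
  case (3 m)
  have eq: "lucas (Suc (Suc m)) - vt ^ Suc (Suc m)
      = vt * (lucas (Suc m) - vt ^ Suc m) + vk * lucas m"
    by (simp add: lucas.simps algebra_simps)
  have "vt * (lucas (Suc m) - vt ^ Suc m)
      \<in> mon_span (\<lambda>(i, a, c). i = 0 \<and> a + 2 * c = Suc (Suc m) \<and> a < Suc (Suc m))"
    using vars_in_mon_span(2) 3(1) by (rule mon_span_mult) auto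
  moreover have "vk * lucas m
      \<in> mon_span (\<lambda>(i, a, c). i = 0 \<and> a + 2 * c = Suc (Suc m) \<and> a < Suc (Suc m))"
    using vars_in_mon_span(3) lucas_in_mon_span by (rule mon_span_mult) auto
  ultimately show ?case
    unfolding eq by (rule mon_span_add)
qed (simp_all add: cs.subspace_0[OF subspace_mon_span])

lemma lucas_in_homog: "lucas m \<in> homog m"
  using lucas_in_mon_span unfolding homog_eq_mon_span by (rule subsetD[OF mon_span_mono, rotated]) auto

lemma zseq_Suc_eq: "zseq (Suc m) = 2 * vb ^ m + (\<Sum>j<m. vb ^ j * lucas (m - j))"
proof (induction m)
  case (Suc m)
  have "(\<Sum>j<Suc m. vb ^ j * lucas (Suc m - j)) = lucas (Suc m) + vb * (\<Sum>j<m. vb ^ j * lucas (m - j))"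
    by (subst sum.lessThan_Suc_shift) (simp add: sum_distrib_left mult.assoc)
  with Suc show ?case
    by (simp add: zseq.simps algebra_simps)
qed (simp add: zseq.simps)

lemma zseq_in_homog: "zseq (Suc m) \<in> homog m"
proof -
  have "vb ^ j * lucas (m - j) \<in> homog m" if "j < m" for j
    using homog_mult[OF mon_in_homog lucas_in_homog, of "(j, 0, 0)" "m - j"] that
    by (simp add: mon_eq_prod_powers)
  moreover have "2 * vb ^ m \<in> homog m"
    using homog_mult[OF lucas_in_homog mon_in_homog, of 0 "(m, 0, 0)"] by (simp add: mon_eq_prod_powers)
  ultimately show ?thesis
    unfolding zseq_Suc_eq homog_eq_mon_span mon_span_def by (intro cs.span_add cs.span_sum) auto
qed

lemma lucas_shift_in_gen_ideal:
  assumes "lucas m \<in> gen_ideal g" "lucas (Suc m) \<in> gen_ideal g" "j \<le> m"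
  shows "vk ^ j * lucas (m - j) \<in> gen_ideal g"
  using assms(3)
proof (induction j rule: less_induct)
  case (less j)
  consider "j = 0" | "j = 1" | j' where "j = Suc (Suc j')"
    by (metis One_nat_def not0_implies_Suc)
  then show ?case
  proof cases
    case 1
    then show ?thesis using assms(1) by simp
  next
    case 2
    then obtain m' where m: "m = Suc m'"
      using less.prems by (cases m) auto
    have "vk ^ j * lucas (m - j) = lucas (Suc m) - vt * lucas m"
      using 2 by (simp add: m lucas.simps)
    then show ?thesis
      using assms(1,2) by (auto intro!: gen_ideal_closed polys3_closed)
  next
    case 3
    define r where "r = m - Suc (Suc j')"
    have m: "m - j' = Suc (Suc r)" "m - Suc j' = Suc r"
      using less.prems 3 by (auto simp: r_def)
    have "vk ^ j * lucas (m - j) = vk * (vk ^ j' * lucas (m - j')) - vt * (vk ^ Suc j' * lucas (m - Suc j'))"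
      unfolding m 3 r_def[symmetric] by (simp add: lucas.simps algebra_simps)
    moreover have "vk ^ j' * lucas (m - j') \<in> gen_ideal g" "vk ^ Suc j' * lucas (m - Suc j') \<in> gen_ideal g"
      using less.prems 3 by (intro less.IH; simp)+
    ultimately show ?thesis
      by (auto intro!: gen_ideal_closed polys3_closed)
  qed
qed

section \<open>Reducers of the nonstandard monomials\<close>

definition standard :: "nat \<Rightarrow> (nat \<times> nat \<times> nat) set" where
  "standard n = {(i, a, c). i < n \<and> a + c \<le> n}"

lemma finite_standard: "finite (standard n)"
  by (rule finite_subset[of _ "{..n} \<times> {..n} \<times> {..n}"]) (auto simp: standard_def)

text \<open>For \<open>i < n\<close> the truncated difference \<open>a - Suc n\<close> vanishes unless \<open>a > n\<close>: the reducer is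
  \<open>b^i k^c P a\<close> for \<open>a \<le> n\<close> and \<open>b^i t^(a - n - 1) k^c P (n + 1)\<close> otherwise.\<close>

fun reducer :: "nat \<Rightarrow> nat \<times> nat \<times> nat \<Rightarrow> mpoly" where
  "reducer n (i, a, c) =
    (if n \<le> i then mon (i - n, a, c) * zseq (Suc n)
     else mon (i, a - Suc n, c) * lucas (min a (Suc n)))"

declare reducer.simps [simp del]

lemma reducer_in_homog: "reducer n x \<in> homog (mdeg x)"
proof (cases x)
  case (fields i a c)
  show ?thesis
  proof (cases "n \<le> i")
    case True
    then show ?thesis
      using homog_mult[OF mon_in_homog zseq_in_homog, of "(i - n, a, c)" n] fields by (simp add: reducer.simps)
  next
    case False
    have "reducer n x = mon (i, a - Suc n, c) * lucas (min a (Suc n))"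
      using fields False by (simp add: reducer.simps)
    moreover have "mdeg x = mdeg (i, a - Suc n, c) + min a (Suc n)"
      using fields by simp
    ultimately show ?thesis
      by (metis homog_mult mon_in_homog lucas_in_homog)
  qed
qed

lemma reducer_in_polys3: "reducer n x \<in> polys3"
  using reducer_in_homog by (auto simp: homog_def)

lemma reducer_in_lucas_ideal:
  assumes "x \<notin> standard n"
  shows "reducer n x \<in> lucas_ideal n"
proof (cases x)
  case (fields i a c)
  show ?thesis
  proof (cases "n \<le> i")
    case True
    then show ?thesis
      using fields generators_in_lucas_ideal(1)
      unfolding lucas_ideal_def by (auto simp: reducer.simps intro!: gen_ideal_closed polys3_closed)
  next
    case False
    define j where "j = Suc n - min a (Suc n)"
    have j: "j \<le> c" "j \<le> Suc n" "Suc n - j = min a (Suc n)"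
      using assms fields False by (auto simp: standard_def j_def)
    have "reducer n x = mon (i, a - Suc n, c - j) * (vk ^ j * lucas (Suc n - j))"
      using fields False j by (simp add: reducer.simps mult.assoc[symmetric] mon_mult_powers)
    moreover have "vk ^ j * lucas (Suc n - j) \<in> lucas_ideal n"
      using lucas_shift_in_gen_ideal[OF generators_in_lucas_ideal(2,3)[unfolded lucas_ideal_def] j(2)]
      unfolding lucas_ideal_def .
    ultimately show ?thesis
      unfolding lucas_ideal_def by (auto intro!: gen_ideal_closed polys3_closed)
  qed
qed

definition mon_less :: "((nat \<times> nat \<times> nat) \<times> (nat \<times> nat \<times> nat)) set" where
  "mon_less = inv_image (less_than <*lex*> less_than) (\<lambda>(i, a, c). (i, a))"

lemma wf_mon_less: "wf mon_less"
  unfolding mon_less_def by (intro wf_inv_image wf_lex_prod wf_less_than)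

lemma mon_less_iff [simp]: "((i', a', c'), (i, a, c)) \<in> mon_less \<longleftrightarrow> i' < i \<or> i' = i \<and> a' < a"
  by (simp add: mon_less_def)

lemma zseq_leading:
  "mon (i, a, c) * zseq (Suc n) - 2 * mon (i + n, a, c)
    \<in> mon_span (\<lambda>y. mdeg y = mdeg (i + n, a, c) \<and> (y, (i + n, a, c)) \<in> mon_less)"
proof -
  have "(\<Sum>j<n. mon (i + j, a, c) * lucas (n - j)) = mon (i, a, c) * (\<Sum>j<n. vb ^ j * lucas (n - j))"
    by (simp add: sum_distrib_left mult.assoc flip: mon_mult_powers)
  then have "mon (i, a, c) * zseq (Suc n) - 2 * mon (i + n, a, c)
      = (\<Sum>j<n. mon (i + j, a, c) * lucas (n - j))"
    by (simp add: zseq_Suc_eq algebra_simps flip: mon_mult_powers)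
  also have "\<dots> \<in> mon_span (\<lambda>y. mdeg y = mdeg (i + n, a, c) \<and> (y, (i + n, a, c)) \<in> mon_less)"
  proof (rule cs.subspace_sum[OF subspace_mon_span])
    fix j assume j: "j \<in> {..<n}"
    show "mon (i + j, a, c) * lucas (n - j)
        \<in> mon_span (\<lambda>y. mdeg y = mdeg (i + n, a, c) \<and> (y, (i + n, a, c)) \<in> mon_less)"
      using mon_in_mon_span[of "\<lambda>y. y = (i + j, a, c)"] lucas_in_mon_span
      by (rule mon_span_mult) (use j in auto)
  qed
  finally show ?thesis .
qed

lemma lucas_leading:
  assumes "e \<ge> 1"
  shows "mon (i, a, c) * lucas e - mon (i, a + e, c)
    \<in> mon_span (\<lambda>y. mdeg y = mdeg (i, a + e, c) \<and> (y, (i, a + e, c)) \<in> mon_less)"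
proof -
  have "mon (i, a, c) * lucas e - mon (i, a + e, c) = mon (i, a, c) * (lucas e - vt ^ e)"
    by (simp add: right_diff_distrib mon_mult_powers)
  also have "\<dots> \<in> mon_span (\<lambda>y. mdeg y = mdeg (i, a + e, c) \<and> (y, (i, a + e, c)) \<in> mon_less)"
    using mon_in_mon_span[of "\<lambda>y. y = (i, a, c)"] lucas_minus_power_in_mon_span[OF assms]
    by (rule mon_span_mult) auto
  finally show ?thesis .
qed

lemma reducer_leading:
  assumes "x \<notin> standard n"
  shows "\<exists>s. s \<noteq> 0 \<and> reducer n x - cscale s (mon x) \<in> mon_span (\<lambda>y. mdeg y = mdeg x \<and> (y, x) \<in> mon_less)"
proof (cases x)
  case (fields i a c)
  consider "n \<le> i" | "i < n" "a = 0" | "i < n" "a \<ge> 1"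
    by linarith
  then show ?thesis
  proof cases
    case 1
    then show ?thesis
      using zseq_leading[of "i - n" a c n] fields by (auto simp: reducer.simps cscale_numeral intro!: exI[of _ 2])
  next
    case 2
    then show ?thesis
      using fields by (auto simp: reducer.simps cscale_numeral mult.commute cs.subspace_0[OF subspace_mon_span] intro!: exI[of _ 2])
  next
    case 3
    have "a - Suc n + min a (Suc n) = a"
      by simp
    then show ?thesis
      using lucas_leading[of "min a (Suc n)" i "a - Suc n" c] fields 3
      by (auto simp: reducer.simps intro!: exI[of _ 1])
  qed
qed

section \<open>The ideal lies in the span of the reducers\<close>

lemma reducer_mult_vk: "vk * reducer n (i, a, c) = reducer n (i, a, Suc c)"
  by (simp add: reducer.simps mult.assoc[symmetric] vars_mult_mon)

lemma reducer_mult_vb: "Suc i \<noteq> n \<Longrightarrow> vb * reducer n (i, a, c) = reducer n (Suc i, a, c)"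
  by (auto simp: reducer.simps mult.assoc[symmetric] vars_mult_mon Suc_diff_le)

lemma reducer_eq_vb_power: "i < n \<Longrightarrow> reducer n (i, a, c) = vb ^ i * reducer n (0, a, c)"
  by (simp add: reducer.simps mult.assoc[symmetric] mult.commute[of "vb ^ i"] mon_mult_powers)

definition nonstandard_layer :: "nat \<Rightarrow> nat \<Rightarrow> (nat \<times> nat \<times> nat) set" where
  "nonstandard_layer n i = {x. x \<notin> standard n \<and> fst x = i}"

lemma reducer_mult_vt:
  assumes "(i, a, c) \<notin> standard n"
  shows "vt * reducer n (i, a, c) \<in> cs.span (reducer n ` nonstandard_layer n i)"
proof -
  have base: "reducer n y \<in> cs.span (reducer n ` nonstandard_layer n i)" if "y \<in> nonstandard_layer n i" for y
    using that by (intro cs.span_base imageI)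
  consider "n \<le> i \<or> Suc n \<le> a" | "i < n" "a = 0" | "i < n" "1 \<le> a" "a \<le> n"
    by linarith
  then show ?thesis
  proof cases
    case 1
    then have "vt * reducer n (i, a, c) = reducer n (i, Suc a, c)"
      by (auto simp: reducer.simps mult.assoc[symmetric] vars_mult_mon Suc_diff_Suc)
    moreover have "(i, Suc a, c) \<in> nonstandard_layer n i"
      using 1 by (auto simp: nonstandard_layer_def standard_def)
    ultimately show ?thesis
      using base by simp
  next
    case 2
    then have "vt * reducer n (i, a, c) = cscale 2 (reducer n (i, 1, c))"
      by (simp add: reducer.simps cscale_numeral mult_ac)
    moreover have "(i, 1, c) \<in> nonstandard_layer n i"
      using 2 assms by (auto simp: nonstandard_layer_def standard_def)
    ultimately show ?thesis
      using base by (simp add: cs.span_scale)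
  next
    case 3
    then obtain a' where a': "a = Suc a'"
      by (cases a) auto
    have lucas_a: "vt * lucas a = lucas (Suc a) - vk * lucas a'"
      by (cases a') (simp_all add: a' lucas.simps)
    have r: "reducer n (i, a, c) = mon (i, 0, c) * lucas a"
      "reducer n (i, Suc a, c) = mon (i, 0, c) * lucas (Suc a)"
      "reducer n (i, a', c) = mon (i, 0, c) * lucas a'"
      using 3 a' by (simp_all add: reducer.simps)
    have "vt * reducer n (i, a, c) = mon (i, 0, c) * (vt * lucas a)"
      by (simp add: r mult_ac)
    also have "\<dots> = reducer n (i, Suc a, c) - vk * reducer n (i, a', c)"
      by (simp add: lucas_a r algebra_simps)
    finally have "vt * reducer n (i, a, c) = reducer n (i, Suc a, c) - reducer n (i, a', Suc c)"
      by (simp add: reducer_mult_vk)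
    moreover have "(i, Suc a, c) \<in> nonstandard_layer n i" "(i, a', Suc c) \<in> nonstandard_layer n i"
      using 3 a' assms by (auto simp: nonstandard_layer_def standard_def)
    ultimately show ?thesis
      using base by (simp add: cs.span_diff)
  qed
qed

lemma lucas_mult_span_nonstandard_layer:
  assumes "u \<in> cs.span (reducer n ` nonstandard_layer n i)"
  shows "lucas m * u \<in> cs.span (reducer n ` nonstandard_layer n i)"
proof -
  have vt: "vt * v \<in> cs.span (reducer n ` nonstandard_layer n i)" if "v \<in> cs.span (reducer n ` nonstandard_layer n i)" for v
    using that
  proof (rule mult_in_span)
    fix s assume "s \<in> reducer n ` nonstandard_layer n i"
    then obtain a c where "s = reducer n (i, a, c)" "(i, a, c) \<notin> standard n"
      by (auto simp: nonstandard_layer_def)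
    then show "vt * s \<in> cs.span (reducer n ` nonstandard_layer n i)"
      using reducer_mult_vt by simp
  qed
  have vk: "vk * v \<in> cs.span (reducer n ` nonstandard_layer n i)" if "v \<in> cs.span (reducer n ` nonstandard_layer n i)" for v
    using that
  proof (rule mult_in_span)
    fix s assume "s \<in> reducer n ` nonstandard_layer n i"
    then obtain a c where "s = reducer n (i, a, c)" "(i, a, c) \<notin> standard n"
      by (auto simp: nonstandard_layer_def)
    moreover have "(i, a, Suc c) \<in> nonstandard_layer n i" if "(i, a, c) \<notin> standard n"
      using that by (auto simp: nonstandard_layer_def standard_def)
    ultimately show "vk * s \<in> cs.span (reducer n ` nonstandard_layer n i)"
      by (auto simp: reducer_mult_vk intro!: cs.span_base)
  qed
  show ?thesis
    using assms
  proof (induction m arbitrary: u rule: lucas.induct)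
    case 1
    then show ?case
      using cs.span_scale[of u _ 2] by (simp add: cscale_numeral)
  next
    case 2
    then show ?case by (simp add: vt)
  next
    case (3 m)
    then show ?case
      by (simp add: lucas.simps distrib_right mult.assoc vt vk cs.span_add)
  qed
qed

lemma zseq_mult_in_span_reducers:
  assumes "q \<in> polys3"
  shows "zseq (Suc n) * q \<in> cs.span (reducer n ` (- standard n))"
  using assms unfolding polys3_eq_mon_span mon_span_def
proof (rule mult_in_span)
  fix s assume "s \<in> mon ` Collect (\<lambda>_. True)"
  then obtain i a c where "s = mon (i, a, c)"
    by auto
  moreover have "zseq (Suc n) * mon (i, a, c) = reducer n (i + n, a, c)"
    by (simp add: reducer.simps mult.commute)
  moreover have "(i + n, a, c) \<notin> standard n"
    by (simp add: standard_def)
  ultimately show "zseq (Suc n) * s \<in> cs.span (reducer n ` (- standard n))"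
    by (auto intro!: cs.span_base)
qed

lemma vb_power_mult_span_nonstandard_layer_0:
  assumes "j < n" "u \<in> cs.span (reducer n ` nonstandard_layer n 0)"
  shows "vb ^ j * u \<in> cs.span (reducer n ` (- standard n))"
  using assms(2)
proof (rule mult_in_span)
  fix s assume "s \<in> reducer n ` nonstandard_layer n 0"
  then obtain a c where "s = reducer n (0, a, c)" "(0, a, c) \<notin> standard n"
    by (auto simp: nonstandard_layer_def)
  moreover have "(j, a, c) \<notin> standard n" if "(0, a, c) \<notin> standard n"
    using that assms(1) by (auto simp: standard_def)
  ultimately have "vb ^ j * s = reducer n (j, a, c)" "(j, a, c) \<in> - standard n"
    using assms(1) reducer_eq_vb_power[of j n a c] by auto
  then show "vb ^ j * s \<in> cs.span (reducer n ` (- standard n))"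
    by (simp add: cs.span_base)
qed

text \<open>Multiplying by \<open>b\<close> can raise the \<open>b\<close>-exponent of a reducer to \<open>n\<close>, out of the family;
  there \<open>2 b^n = Z (n + 1) - (\<Sum>j<n. b^j P (n - j))\<close> brings it back.\<close>

lemma vb_mult_reducer_in_span_reducers:
  assumes "n \<ge> 1" "(i, a, c) \<notin> standard n"
  shows "vb * reducer n (i, a, c) \<in> cs.span (reducer n ` (- standard n))"
proof (cases "Suc i = n")
  case False
  moreover have "(Suc i, a, c) \<notin> standard n"
    using assms(2) by (auto simp: standard_def)
  ultimately show ?thesis
    by (auto simp: reducer_mult_vb intro!: cs.span_base)
next
  case True
  let ?q = "reducer n (0, a, c)"
  have q_layer: "(0, a, c) \<in> nonstandard_layer n 0"
    using assms True by (auto simp: nonstandard_layer_def standard_def)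
  have "i < n"
    using True by simp
  have "vb * reducer n (i, a, c) = vb ^ Suc i * ?q"
    by (simp add: reducer_eq_vb_power[OF \<open>i < n\<close>] mult.assoc)
  also have "\<dots> = vb ^ n * ?q"
    by (simp only: True)
  also have "\<dots> = cscale (1 / 2) ((2 * vb ^ n) * ?q)"
    by (simp flip: cscale_numeral)
  also have "\<dots> = cscale (1 / 2) (zseq (Suc n) * ?q - (\<Sum>j<n. vb ^ j * (lucas (n - j) * ?q)))"
    by (simp add: zseq_Suc_eq algebra_simps sum_distrib_left sum_distrib_right mult_ac)
  also have "\<dots> \<in> cs.span (reducer n ` (- standard n))"
    using q_layer
    by (intro cs.span_scale cs.span_diff cs.span_sum zseq_mult_in_span_reducers reducer_in_polys3
        vb_power_mult_span_nonstandard_layer_0 lucas_mult_span_nonstandard_layer cs.span_base imageI) auto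
  finally show ?thesis .
qed

lemma polys3_mult_span_reducers:
  assumes "n \<ge> 1" "p \<in> polys3" "u \<in> cs.span (reducer n ` (- standard n))"
  shows "p * u \<in> cs.span (reducer n ` (- standard n))"
proof -
  let ?W = "cs.span (reducer n ` (- standard n))"
  have base: "reducer n x \<in> ?W" if "x \<notin> standard n" for x
    using that by (intro cs.span_base imageI) simp
  have layer_subset: "cs.span (reducer n ` nonstandard_layer n i) \<subseteq> ?W" for i
    by (intro cs.span_mono image_mono) (auto simp: nonstandard_layer_def)
  have vb: "vb * u \<in> ?W" if "u \<in> ?W" for u
    using that by (rule mult_in_span) (use assms vb_mult_reducer_in_span_reducers in auto)
  have vt: "vt * u \<in> ?W" if "u \<in> ?W" for u
  proof (rule mult_in_span[OF that])
    fix s assume "s \<in> reducer n ` (- standard n)"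
    then obtain i a c where "s = reducer n (i, a, c)" "(i, a, c) \<notin> standard n"
      by auto
    then show "vt * s \<in> ?W"
      using reducer_mult_vt layer_subset by blast
  qed
  have vk: "vk * u \<in> ?W" if "u \<in> ?W" for u
  proof (rule mult_in_span[OF that])
    fix s assume "s \<in> reducer n ` (- standard n)"
    then obtain i a c where "s = reducer n (i, a, c)" "(i, a, c) \<notin> standard n"
      by auto
    moreover have "(i, a, Suc c) \<notin> standard n"
      using \<open>(i, a, c) \<notin> standard n\<close> by (auto simp: standard_def)
    ultimately show "vk * s \<in> ?W"
      using base by (simp add: reducer_mult_vk)
  qed
  show ?thesis
    using cs.subspace_span vb vt vk assms(2,3) by (rule polys3_mult_closed)
qed

lemma lucas_ideal_subset_span_reducers:
  assumes "n \<ge> 1"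
  shows "lucas_ideal n \<subseteq> cs.span (reducer n ` (- standard n))"
proof -
  let ?W = "cs.span (reducer n ` (- standard n))"
  have base: "reducer n x \<in> ?W" if "x \<notin> standard n" for x
    using that by (intro cs.span_base imageI) simp
  have closed: "p * u \<in> ?W" if "p \<in> polys3" "u \<in> ?W" for p u
    using assms that by (rule polys3_mult_span_reducers)
  have nonstandard: "(n, 0, 0) \<notin> standard n" "(0, Suc n, 0) \<notin> standard n" "(0, n, 1) \<notin> standard n"
    by (simp_all add: standard_def)
  have "reducer n (n, 0, 0) = zseq (Suc n)" "reducer n (0, Suc n, 0) = lucas (Suc n)"
    "reducer n (0, n, 1) = vk * lucas n"
    using assms by (simp_all add: reducer.simps vars_eq_mon)
  then have Z: "zseq (Suc n) \<in> ?W" and P1: "lucas (Suc n) \<in> ?W" and "vk * lucas n \<in> ?W"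
    using base[OF nonstandard(1)] base[OF nonstandard(2)] base[OF nonstandard(3)] by simp_all
  then have P2: "lucas (Suc (Suc n)) \<in> ?W"
    using closed[OF vars_in_polys3(2) P1] by (simp add: lucas.simps cs.span_add)
  have "vector [zseq (Suc n), lucas (Suc n), lucas (Suc (Suc n))] $ i \<in> ?W" for i :: 3
    using Z P1 P2 exhaust_3[of i] by auto
  then show ?thesis
    unfolding lucas_ideal_def using closed by (intro gen_ideal_least[OF cs.subspace_span])
qed

section \<open>Dimension count and Hilbert series\<close>

lemma dim_lucas_ideal_homog_le:
  assumes "n \<ge> 1"
  shows "cs.dim (lucas_ideal n \<inter> homog d) \<le> card ({x. mdeg x = d} - standard n)"
proof -
  have fin: "finite ({x. mdeg x = d} - standard n)"
    using finite_mdeg_eq by simp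
  have "lucas_ideal n \<inter> homog d \<subseteq> cs.span (reducer n ` ({x. mdeg x = d} - standard n))"
  proof
    fix p assume "p \<in> lucas_ideal n \<inter> homog d"
    then have "p \<in> cs.span (reducer n ` (- standard n))" "p \<in> homog d"
      using lucas_ideal_subset_span_reducers[OF assms] by auto
    then have "p \<in> cs.span (reducer n ` {x \<in> - standard n. mdeg x = d})"
      using reducer_in_homog by (intro homog_in_span_graded)
    moreover have "{x \<in> - standard n. mdeg x = d} = {x. mdeg x = d} - standard n"
      by auto
    ultimately show "p \<in> cs.span (reducer n ` ({x. mdeg x = d} - standard n))"
      by simp
  qed
  then have "cs.dim (lucas_ideal n \<inter> homog d) \<le> card (reducer n ` ({x. mdeg x = d} - standard n))"
    using fin by (intro cs.dim_le_card) auto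
  also have "\<dots> \<le> card ({x. mdeg x = d} - standard n)"
    using fin by (rule card_image_le)
  finally show ?thesis .
qed

lemma card_mdeg_le_dim_lucas_ideal_homog:
  "card {x. mdeg x = d} \<le> cs.dim (lucas_ideal n \<inter> homog d) + card ({x. mdeg x = d} \<inter> standard n)"
proof -
  define M where "M = {x. mdeg x = d}"
  define U where "U = lucas_ideal n \<inter> homog d"
  have "mon ` M \<subseteq> cs.span (reducer n ` (M - standard n) \<union> mon ` (M \<inter> standard n))"
  proof (rule cs.span_triangular[OF wf_mon_less])
    fix x assume "x \<in> M" "x \<notin> standard n"
    then show "\<exists>s. s \<noteq> 0 \<and> reducer n x - cscale s (mon x) \<in> cs.span (mon ` {y \<in> M. (y, x) \<in> mon_less})"
      using reducer_leading[of x n] by (simp add: M_def mon_span_def)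
  qed
  also have "\<dots> \<subseteq> cs.span (U \<union> mon ` (M \<inter> standard n))"
    using reducer_in_lucas_ideal reducer_in_homog by (intro cs.span_mono) (auto simp: U_def M_def)
  finally have "card (mon ` M) \<le> cs.dim U + card (mon ` (M \<inter> standard n))"
  proof (rule cs.card_le_dim_add_card[rotated 3])
    show "cs.independent (mon ` M)"
      by (rule cs.independent_mono[OF independent_singles]) (auto simp: mon_def)
    show "U \<subseteq> cs.span (mon ` M)"
      by (auto simp: U_def M_def homog_eq_mon_span mon_span_def)
  qed (use finite_mdeg_eq in \<open>auto simp: M_def\<close>)
  then show ?thesis
    by (simp add: M_def U_def card_image inj_on_subset[OF inj_mon])
qed

lemma hilbert_fun_lucas_ideal:
  assumes "n \<ge> 1"
  shows "hilbert_fun (lucas_ideal n) d = card {x \<in> standard n. mdeg x = d}"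
proof -
  have "card {x. mdeg x = d} = card ({x. mdeg x = d} \<inter> standard n) + card ({x. mdeg x = d} - standard n)"
    using finite_mdeg_eq by (rule card_Int_Diff)
  moreover have "{x. mdeg x = d} \<inter> standard n = {x \<in> standard n. mdeg x = d}"
    by auto
  ultimately show ?thesis
    using dim_lucas_ideal_homog_le[OF assms, of d] card_mdeg_le_dim_lucas_ideal_homog[of d n]
    by (simp add: hilbert_fun_def dim_homog)
qed

lemma hilbert_series_lucas_ideal:
  assumes "n \<ge> 1"
  shows "hilbert_series (lucas_ideal n) = (\<Sum>x\<in>standard n. fps_X ^ mdeg x)"
proof (rule fps_ext)
  fix d
  have "fps_nth (\<Sum>x\<in>standard n. fps_X ^ mdeg x :: complex fps) d = (\<Sum>x\<in>standard n. of_bool (mdeg x = d))"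
    by (auto simp: fps_sum_nth intro!: sum.cong)
  also have "\<dots> = of_nat (card {x \<in> standard n. mdeg x = d})"
    using finite_standard by (simp add: Int_def)
  finally show "fps_nth (hilbert_series (lucas_ideal n)) d = fps_nth (\<Sum>x\<in>standard n. fps_X ^ mdeg x) d"
    by (simp add: hilbert_series_def hilbert_fun_lucas_ideal[OF assms])
qed

lemma sum_power_standard:
  fixes z :: "'a :: comm_semiring_1"
  shows "(\<Sum>x\<in>standard n. z ^ mdeg x) = (\<Sum>i<n. z ^ i) * (\<Sum>(a, c)\<in>{(a, c). a + c \<le> n}. z ^ (a + 2 * c))"
proof -
  have "standard n = {..<n} \<times> {(a, c). a + c \<le> n}"
    by (auto simp: standard_def)
  then have "(\<Sum>x\<in>standard n. z ^ mdeg x)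
      = (\<Sum>(i, ac)\<in>{..<n} \<times> {(a, c). a + c \<le> n}. z ^ i * z ^ (fst ac + 2 * snd ac))"
    by (intro sum.cong) (auto simp: power_add add.assoc)
  also have "\<dots> = (\<Sum>i<n. \<Sum>ac\<in>{(a, c). a + c \<le> n}. z ^ i * z ^ (fst ac + 2 * snd ac))"
    by (simp add: sum.cartesian_product)
  finally show ?thesis
    by (simp add: sum_product case_prod_beta)
qed

lemma triangle_power_sum:
  fixes z :: "'a :: comm_ring_1"
  shows "(1 - z) * (1 - z ^ 2) * (\<Sum>(a, c)\<in>{(a, c). a + c \<le> n}. z ^ (a + 2 * c))
    = (1 - z ^ Suc n) * (1 - z ^ Suc (Suc n))"
proof (induction n)
  case 0
  have "{(a, c). a + c \<le> (0::nat)} = {(0, 0)}"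
    by auto
  then show ?case
    by (simp add: algebra_simps power2_eq_square)
next
  case (Suc n)
  let ?T = "\<lambda>n. {(a, c). a + c \<le> (n::nat)}"
  let ?f = "\<lambda>(a, c). z ^ (a + 2 * c)"
  have fin: "finite (?T n)"
    by (rule finite_subset[of _ "{..n} \<times> {..n}"]) auto
  have T_Suc: "?T (Suc n) = ?T n \<union> (\<lambda>c. (Suc n - c, c)) ` {..Suc n}"
    by (auto simp: image_iff intro!: bexI[where x = "snd _"])
  have "sum ?f ((\<lambda>c. (Suc n - c, c)) ` {..Suc n}) = (\<Sum>c\<le>Suc n. z ^ (Suc n + c))"
    by (subst sum.reindex) (auto simp: inj_on_def algebra_simps intro!: sum.cong)
  also have "\<dots> = z ^ Suc n * (\<Sum>c<Suc (Suc n). z ^ c)"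
    by (simp only: power_add sum_distrib_left lessThan_Suc_atMost)
  finally have new: "sum ?f ((\<lambda>c. (Suc n - c, c)) ` {..Suc n}) = z ^ Suc n * (\<Sum>c<Suc (Suc n). z ^ c)" .
  define S where "S = sum ?f (?T n)"
  define g where "g = (\<Sum>c<Suc (Suc n). z ^ c)"
  have IH: "(1 - z) * (1 - z ^ 2) * S = (1 - z ^ Suc n) * (1 - z ^ Suc (Suc n))"
    using Suc.IH by (simp add: S_def)
  have geometric: "(1 - z) * g = 1 - z ^ Suc (Suc n)"
    using one_diff_power_eq[of z "Suc (Suc n)"] by (simp add: g_def)
  have "sum ?f (?T (Suc n)) = S + z ^ Suc n * g"
    unfolding T_Suc S_def g_def new[symmetric] using fin by (intro sum.union_disjoint) auto
  then have "(1 - z) * (1 - z ^ 2) * sum ?f (?T (Suc n))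
      = (1 - z) * (1 - z ^ 2) * S + (1 - z ^ 2) * z ^ Suc n * ((1 - z) * g)"
    by (simp add: algebra_simps)
  also have "\<dots> = (1 - z ^ Suc (Suc n)) * (1 - z ^ Suc (Suc (Suc n)))"
    unfolding IH geometric by (simp add: algebra_simps power2_eq_square)
  finally show ?case .
qed

theorem lemma4p28:
  fixes n :: nat
  assumes "n \<ge> 1"
  shows "hilbert_series (gen_ideal (G (n + 1))) =
    ((1 - fps_X ^ n) * (1 - fps_X ^ (n + 1)) * (1 - fps_X ^ (n + 2)))
      / ((fps_X - 1) ^ 2 * (1 - fps_X ^ 2))"
proof -
  let ?X = "fps_X :: complex fps"
  let ?A = "\<Sum>i<n. ?X ^ i"
  let ?B = "\<Sum>(a, c)\<in>{(a, c). a + c \<le> n}. ?X ^ (a + 2 * c)"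
  let ?D = "(?X - 1) ^ 2 * (1 - ?X ^ 2)"
  have series: "hilbert_series (gen_ideal (G (n + 1))) = ?A * ?B"
    using gen_ideal_G_Suc[of n] hilbert_series_lucas_ideal[OF assms] sum_power_standard by simp
  have "?D * (?A * ?B) = ((1 - ?X) * ?A) * ((1 - ?X) * (1 - ?X ^ 2) * ?B)"
    by (simp add: algebra_simps power2_eq_square)
  also have "\<dots> = (1 - ?X ^ n) * (1 - ?X ^ (n + 1)) * (1 - ?X ^ (n + 2))"
    using one_diff_power_eq[of ?X n] triangle_power_sum[of ?X n] by (simp add: mult.assoc)
  finally have "?D * (?A * ?B) = (1 - ?X ^ n) * (1 - ?X ^ (n + 1)) * (1 - ?X ^ (n + 2))" .
  moreover have "?D \<noteq> 0"
    using arg_cong[of ?D 0 "\<lambda>f. fps_nth f 0"] by (simp add: power2_eq_square)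
  ultimately show ?thesis
    unfolding series by (metis nonzero_mult_div_cancel_left)
qed

end
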